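(* Let $n\geq 4$ and let $\delta: VT_n\to\mathrm{GL}_{n+1}(\mathbb{C})$ be a homogeneous $3$-local representation of $VT_n$, equivalent to one of the representations $\delta_j$, $1\le j\le 14$, described below. Then: (1) if $\delta$ is equivalent to $\delta_1$ with $e=1$, then $\delta$ is unfaithful; (2) if $\delta$ is equivalent to $\delta_2$ with $e=1$, then $\delta$ is unfaithful; (3) if $\delta$ is equivalent to $\delta_3$ with $d=\frac1p$, then $\delta$ is unfaithful; (4) if $\delta$ is equivalent to $\delta_4$ with $h=\frac1k$, then $\delta$ is unfaithful; (5) if $\delta$ is equivalent to $\delta_j$ for some $5\le j\le 14$, then $\delta$ is unfaithful.
   Context: The virtual twin group $VT_n$ has generators $s_1,\dots,s_{n-1},\rho_1,\dots,\rho_{n-1}$ and defining relations: $s_i^2=1$; $s_is_j=s_js_i$ ($|i-j|\ge2$); $\rho_i\rho_{i+1}\rho_i=\rho_{i+1}\rho_i\rho_{i+1}$ ($1\le i\le n-2$); $\rho_i\rho_j=\rho_j\rho_i$ ($|i-j|\ge2$); $\rho_i^2=1$; $s_i\rho_j=\rho_js_i$ ($|i-j|\ge2$); $\rho_i\rho_{i+1}s_i=s_{i+1}\rho_i\rho_{i+1}$ ($1\le i\le n-2$). A homogeneous $3$-local representation $\delta:VT_n\to\mathrm{GL}_{n+1}(\mathbb{C})$ is one with $\delta(s_i)=\mathrm{diag}(I_{i-1},M,I_{n-i-1})$, $\delta(\rho_i)=\mathrm{diag}(I_{i-1},N,I_{n-i-1})$ for fixed $M,N\in\mathrm{GL}_3(\mathbb{C})$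 (block-diagonal; $I_r$ the $r\times r$ identity). Equivalent means conjugate by an invertible matrix; unfaithful means not injective. The representation $\delta_j$ is the homogeneous $3$-local representation with $(M,N)=(M_j,N_j)$, where ($\mathbb{C}^*=\mathbb{C}\setminus\{0\}$): $M_1=\begin{pmatrix}1&0&0\\0&e&\frac{1-e^2}{h}\\0&h&-e\end{pmatrix}$, $N_1=\begin{pmatrix}1&0&0\\0&0&p\\0&\frac1p&0\end{pmatrix}$ ($e\in\mathbb{C}$, $h,p\in\mathbb{C}^*$); $M_2=\begin{pmatrix}-e&\frac{1-e^2}{d}&0\\d&e&0\\0&0&1\end{pmatrix}$, $N_2=\begin{pmatrix}0&k&0\\\frac1k&0&0\\0&0&1\end{pmatrix}$ ($e\in\mathbb{C}$, $d,k\in\mathbb{C}^*$); $M_3=\begin{pmatrix}1&0&0\\d&-1&2p-dp^2\\0&0&1\end{pmatrix}$, $N_3=\begin{pmatrix}1&0&0\\\frac1p&-1&p\\0&0&1\end{pmatrix}$ ($d\in\mathbb{C}$, $p\in\mathbb{C}^*$); $M_4=\begin{pmatrix}1&2k-hk^2&0\\0&-1&0\\0&h&1\end{pmatrix}$, $N_4=\begin{pmatrix}1&k&0\\0&-1&0\\0&\frac1k&1\end{pmatrix}$ ($h\in\mathbb{C}$, $k\in\mathbb{C}^*$); $M_5=\begin{pmatrix}1&b&0\\0&-1&0\\0&0&1\end{pmatrix}$, $N_5=N_2$ ($b\in\mathbb{C}$, $k\in\mathbb{C}^*$); $M_6=\begin{pmatrix}-1&b&0\\0&1&0\\0&0&1\end{pmatrix}$,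 $N_6=N_2$ ($b\in\mathbb{C}$, $k\in\mathbb{C}^*$); $M_7=I_3$, $N_7=\begin{pmatrix}1&0&0\\\frac1p&-1&p\\0&0&1\end{pmatrix}$ ($p\in\mathbb{C}^*$); $M_8=I_3$, $N_8=\begin{pmatrix}1&k&0\\0&-1&0\\0&\frac1k&1\end{pmatrix}$ ($k\in\mathbb{C}^*$); $M_9=\mathrm{diag}(1,-1,-1)$, $N_9=\begin{pmatrix}1&0&0\\0&0&p\\0&\frac1p&0\end{pmatrix}$ ($p\in\mathbb{C}^*$); $M_{10}=\mathrm{diag}(1,-1,1)$, $N_{10}=N_9$; $M_{11}=I_3$, $N_{11}=N_9$ ($p\in\mathbb{C}^*$); $M_{12}=\mathrm{diag}(-1,-1,1)$, $N_{12}=\begin{pmatrix}0&k&0\\\frac1k&0&0\\0&0&1\end{pmatrix}$; $M_{13}=I_3$, $N_{13}=N_{12}$ ($k\in\mathbb{C}^*$); $M_{14}=N_{14}=I_3$. *)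

theory Defs
  imports Complex_Main "Jordan_Normal_Form.Matrix"
begin

(* Generators of the virtual twin group VT_n: S i = s_i, R i = rho_i (1 <= i <= n-1). *)
datatype vt_gen = S nat | R nat

(* A word is a list of generators; all generators of VT_n are involutions
   (s_i^2 = rho_i^2 = 1), so every group element is a positive word. *)
definition vt_word :: "nat \<Rightarrow> vt_gen list \<Rightarrow> bool" where
  "vt_word n w \<longleftrightarrow> (\<forall>g \<in> set w. case g of S i \<Rightarrow> 1 \<le> i \<and> i \<le> n - 1
                                         | R i \<Rightarrow> 1 \<le> i \<and> i \<le> n - 1)"

definition vt_rels :: "nat \<Rightarrow> (vt_gen list \<times> vt_gen list) set" where
  "vt_rels n =
     {([S i, S i], []) | i. 1 \<le> i \<and> i \<le> n - 1}
   \<union> {([S i, S j], [S j, S i]) | i j. 1 \<le> i \<and> i \<le> n - 1 \<and> 1 \<le> j \<and> j \<le> n - 1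
                                    \<and> (i + 2 \<le> j \<or> j + 2 \<le> i)}
   \<union> {([R i, R (i+1), R i], [R (i+1), R i, R (i+1)]) | i. 1 \<le> i \<and> i \<le> n - 2}
   \<union> {([R i, R j], [R j, R i]) | i j. 1 \<le> i \<and> i \<le> n - 1 \<and> 1 \<le> j \<and> j \<le> n - 1
                                    \<and> (i + 2 \<le> j \<or> j + 2 \<le> i)}
   \<union> {([R i, R i], []) | i. 1 \<le> i \<and> i \<le> n - 1}
   \<union> {([S i, R j], [R j, S i]) | i j. 1 \<le> i \<and> i \<le> n - 1 \<and> 1 \<le> j \<and> j \<le> n - 1
                                    \<and> (i + 2 \<le> j \<or> j + 2 \<le> i)}
   \<union> {([R i, R (i+1), S i], [S (i+1), R i, R (i+1)]) | i. 1 \<le> i \<and> i \<le> n - 2}"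

inductive vt_eq :: "nat \<Rightarrow> vt_gen list \<Rightarrow> vt_gen list \<Rightarrow> bool" for n where
  vt_refl: "vt_eq n w w"
| vt_sym: "vt_eq n u v \<Longrightarrow> vt_eq n v u"
| vt_trans: "vt_eq n u v \<Longrightarrow> vt_eq n v w \<Longrightarrow> vt_eq n u w"
| vt_rel: "(l, r) \<in> vt_rels n \<Longrightarrow> vt_word n u \<Longrightarrow> vt_word n v
            \<Longrightarrow> vt_eq n (u @ l @ v) (u @ r @ v)"

(* diag(I_{i-1}, A, I_{n-i-1}) as an (n+1)x(n+1) matrix, A a 3x3 matrix. *)
definition local_mat :: "nat \<Rightarrow> nat \<Rightarrow> complex mat \<Rightarrow> complex mat" where
  "local_mat n i A = mat (n+1) (n+1) (\<lambda>(r, c).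
      if i - 1 \<le> r \<and> r \<le> i + 1 \<and> i - 1 \<le> c \<and> c \<le> i + 1
      then A $$ (r + 1 - i, c + 1 - i)
      else if r = c then 1 else 0)"

fun gen_mat :: "nat \<Rightarrow> complex mat \<Rightarrow> complex mat \<Rightarrow> vt_gen \<Rightarrow> complex mat" where
  "gen_mat n M N (S i) = local_mat n i M"
| "gen_mat n M N (R i) = local_mat n i N"

definition word_mat :: "nat \<Rightarrow> complex mat \<Rightarrow> complex mat \<Rightarrow> vt_gen list \<Rightarrow> complex mat" where
  "word_mat n M N w = foldr (\<lambda>g A. gen_mat n M N g * A) w (1\<^sub>m (n+1))"

definition hom3_rep :: "nat \<Rightarrow> complex mat \<Rightarrow> complex mat \<Rightarrow> bool" where
  "hom3_rep n M N \<longleftrightarrow> M \<in> carrier_mat 3 3 \<and> N \<in> carrier_mat 3 3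
     \<and> invertible_mat M \<and> invertible_mat N
     \<and> (\<forall>(l, r) \<in> vt_rels n. word_mat n M N l = word_mat n M N r)"

definition rep_equiv :: "nat \<Rightarrow> complex mat \<Rightarrow> complex mat \<Rightarrow> complex mat \<Rightarrow> complex mat \<Rightarrow> bool" where
  "rep_equiv n M N M' N' \<longleftrightarrow> (\<exists>P. P \<in> carrier_mat (n+1) (n+1) \<and> invertible_mat P \<and>
     (\<forall>g. vt_word n [g] \<longrightarrow> gen_mat n M N g * P = P * gen_mat n M' N' g))"

definition unfaithful :: "nat \<Rightarrow> complex mat \<Rightarrow> complex mat \<Rightarrow> bool" where
  "unfaithful n M N \<longleftrightarrow> (\<exists>u v. vt_word n u \<and> vt_word n v \<and> \<not> vt_eq n u v
                                \<and> word_mat n M N u = word_mat n M N v)"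

definition mat3 :: "complex list list \<Rightarrow> complex mat" where
  "mat3 xs = mat_of_rows_list 3 xs"

definition M1 :: "complex \<Rightarrow> complex \<Rightarrow> complex mat" where
  "M1 e h = mat3 [[1,0,0],[0,e,(1 - e^2)/h],[0,h,-e]]"
definition N1 :: "complex \<Rightarrow> complex mat" where
  "N1 p = mat3 [[1,0,0],[0,0,p],[0,1/p,0]]"
definition M2 :: "complex \<Rightarrow> complex \<Rightarrow> complex mat" where
  "M2 e d = mat3 [[-e,(1 - e^2)/d,0],[d,e,0],[0,0,1]]"
definition N2 :: "complex \<Rightarrow> complex mat" where
  "N2 k = mat3 [[0,k,0],[1/k,0,0],[0,0,1]]"
definition M3 :: "complex \<Rightarrow> complex \<Rightarrow> complex mat" where
  "M3 d p = mat3 [[1,0,0],[d,-1,2*p - d*p^2],[0,0,1]]"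
definition N3 :: "complex \<Rightarrow> complex mat" where
  "N3 p = mat3 [[1,0,0],[1/p,-1,p],[0,0,1]]"
definition M4 :: "complex \<Rightarrow> complex \<Rightarrow> complex mat" where
  "M4 h k = mat3 [[1,2*k - h*k^2,0],[0,-1,0],[0,h,1]]"
definition N4 :: "complex \<Rightarrow> complex mat" where
  "N4 k = mat3 [[1,k,0],[0,-1,0],[0,1/k,1]]"
definition M5 :: "complex \<Rightarrow> complex mat" where
  "M5 b = mat3 [[1,b,0],[0,-1,0],[0,0,1]]"
definition M6 :: "complex \<Rightarrow> complex mat" where
  "M6 b = mat3 [[-1,b,0],[0,1,0],[0,0,1]]"
definition I3 :: "complex mat" where
  "I3 = mat3 [[1,0,0],[0,1,0],[0,0,1]]"
definition M9 :: "complex mat" where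
  "M9 = mat3 [[1,0,0],[0,-1,0],[0,0,-1]]"
definition M10 :: "complex mat" where
  "M10 = mat3 [[1,0,0],[0,-1,0],[0,0,1]]"
definition M12 :: "complex mat" where
  "M12 = mat3 [[-1,0,0],[0,-1,0],[0,0,1]]"

definition delta_5_14 :: "nat \<Rightarrow> complex mat \<Rightarrow> complex mat \<Rightarrow> bool" where
  "delta_5_14 n M N \<longleftrightarrow>
       (\<exists>b k. k \<noteq> 0 \<and> rep_equiv n M N (M5 b) (N2 k))
     \<or> (\<exists>b k. k \<noteq> 0 \<and> rep_equiv n M N (M6 b) (N2 k))
     \<or> (\<exists>p. p \<noteq> 0 \<and> rep_equiv n M N I3 (N3 p))
     \<or> (\<exists>k. k \<noteq> 0 \<and> rep_equiv n M N I3 (N4 k))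
     \<or> (\<exists>p. p \<noteq> 0 \<and> rep_equiv n M N M9 (N1 p))
     \<or> (\<exists>p. p \<noteq> 0 \<and> rep_equiv n M N M10 (N1 p))
     \<or> (\<exists>p. p \<noteq> 0 \<and> rep_equiv n M N I3 (N1 p))
     \<or> (\<exists>k. k \<noteq> 0 \<and> rep_equiv n M N M12 (N2 k))
     \<or> (\<exists>k. k \<noteq> 0 \<and> rep_equiv n M N I3 (N2 k))
     \<or> rep_equiv n M N I3 I3"

end

(* Each of these representations satisfies a relation that fails in VT_n:
   s_1 = rho_1 for delta_3 and delta_4 at the special parameters; s_1 s_2 = s_2 s_1 whenever M is
   diagonal, which covers delta_7, ..., delta_14; and s_2 commutes with rho_1 s_1 rho_1 (delta_1,
   delta_5) or with rho_1 s_2 rho_1 (delta_2, delta_6).  These relations only involve s_1, s_2,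
   rho_1, whose images act on the first four coordinates, so checking them is a 4 x 4 computation.
   They fail in VT_n because two invariants survive the defining relations: the permutation
   obtained by sending s_i and rho_i to the transposition (i i+1), and the parity of the number of
   letters s_i.  Unfaithfulness passes to equivalent representations. *)

theory Submission
  imports Defs "HOL-Combinatorics.Transposition"
begin

lemma vt_eq_foldr_eq:
  assumes "\<And>l r. (l, r) \<in> vt_rels n \<Longrightarrow> foldr f l = foldr f r"
  shows "vt_eq n u v \<Longrightarrow> foldr f u = foldr f v"
  by (induction rule: vt_eq.induct) (auto simp: fun_eq_iff assms)

fun vt_index :: "vt_gen \<Rightarrow> nat" where
  "vt_index (S i) = i"
| "vt_index (R i) = i"

definition vt_perm :: "vt_gen list \<Rightarrow> nat \<Rightarrow> nat" where
  "vt_perm = foldr (\<lambda>g. transpose (vt_index g) (Suc (vt_index g)))"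

lemma vt_eq_vt_perm: "vt_eq n u v \<Longrightarrow> vt_perm u = vt_perm v"
  unfolding vt_perm_def
  by (rule vt_eq_foldr_eq) (auto simp: vt_rels_def fun_eq_iff transpose_def)

fun s_flip :: "vt_gen \<Rightarrow> bool \<Rightarrow> bool" where
  "s_flip (S i) = Not"
| "s_flip (R i) = id"

lemma vt_eq_s_flip: "vt_eq n u v \<Longrightarrow> foldr s_flip u = foldr s_flip v"
  by (rule vt_eq_foldr_eq) (auto simp: vt_rels_def)

lemma not_vt_eq_S1_R1: "\<not> vt_eq n [S 1] [R 1]"
  using vt_eq_s_flip[of n "[S 1]" "[R 1]"] by (auto simp: fun_eq_iff)

lemma not_vt_eq_S1S2_S2S1: "\<not> vt_eq n [S 1, S 2] [S 2, S 1]"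
proof
  have "vt_perm [S 1, S 2] 1 \<noteq> vt_perm [S 2, S 1] 1"
    by (simp add: vt_perm_def transpose_def)
  then show "vt_eq n [S 1, S 2] [S 2, S 1] \<Longrightarrow> False"
    using vt_eq_vt_perm by metis
qed

lemma not_vt_eq_S2R1S1R1: "\<not> vt_eq n [S 2, R 1, S 1, R 1] [R 1, S 1, R 1, S 2]"
proof
  have "vt_perm [S 2, R 1, S 1, R 1] 1 \<noteq> vt_perm [R 1, S 1, R 1, S 2] 1"
    by (simp add: vt_perm_def transpose_def)
  then show "vt_eq n [S 2, R 1, S 1, R 1] [R 1, S 1, R 1, S 2] \<Longrightarrow> False"
    using vt_eq_vt_perm by metis
qed

lemma not_vt_eq_S2R1S2R1: "\<not> vt_eq n [S 2, R 1, S 2, R 1] [R 1, S 2, R 1, S 2]"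
proof
  have "vt_perm [S 2, R 1, S 2, R 1] 1 \<noteq> vt_perm [R 1, S 2, R 1, S 2] 1"
    by (simp add: vt_perm_def transpose_def)
  then show "vt_eq n [S 2, R 1, S 2, R 1] [R 1, S 2, R 1, S 2] \<Longrightarrow> False"
    using vt_eq_vt_perm by metis
qed

definition pad_one_mat :: "nat \<Rightarrow> 'a::{zero,one} mat \<Rightarrow> 'a mat" where
  "pad_one_mat k A = four_block_mat A (0\<^sub>m (dim_row A) k) (0\<^sub>m k (dim_col A)) (1\<^sub>m k)"

lemma pad_one_mat_one: "pad_one_mat k (1\<^sub>m r) = 1\<^sub>m (r + k)"
  by (simp add: pad_one_mat_def)

lemma pad_one_mat_mult:
  fixes A B :: "'a::semiring_1 mat"
  assumes "A \<in> carrier_mat r s" and "B \<in> carrier_mat s t"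
  shows "pad_one_mat k A * pad_one_mat k B = pad_one_mat k (A * B)"
  unfolding pad_one_mat_def
  by (subst mult_four_block_mat[OF assms(1) _ _ _ assms(2)]) (use assms in auto)

lemma local_mat_pad:
  assumes "i + 1 \<le> m" and "m \<le> n"
  shows "local_mat n i A = pad_one_mat (n - m) (local_mat m i A)"
    (is "_ = ?B")
proof (rule eq_matI)
  fix r c assume "r < dim_row ?B" "c < dim_col ?B"
  then have "r < n + 1" "c < n + 1" using assms by (auto simp: local_mat_def pad_one_mat_def)
  then show "local_mat n i A $$ (r, c) = ?B $$ (r, c)"
    using assms by (auto simp: local_mat_def pad_one_mat_def)
qed (use assms in \<open>auto simp: local_mat_def pad_one_mat_def\<close>)

lemma gen_mat_carrier: "gen_mat n M N g \<in> carrier_mat (n + 1) (n + 1)"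
  by (cases g) (auto simp: local_mat_def)

lemma word_mat_Nil: "word_mat n M N [] = 1\<^sub>m (n + 1)"
  by (simp add: word_mat_def)

lemma word_mat_Cons: "word_mat n M N (g # w) = gen_mat n M N g * word_mat n M N w"
  by (simp add: word_mat_def)

lemma word_mat_carrier: "word_mat n M N w \<in> carrier_mat (n + 1) (n + 1)"
proof (induction w)
  case (Cons g w)
  show ?case
    using mult_carrier_mat[OF gen_mat_carrier Cons.IH] by (simp add: word_mat_Cons)
qed (simp add: word_mat_Nil)

lemma word_mat_pad:
  assumes "\<forall>g \<in> set w. vt_index g + 1 \<le> m" and "m \<le> n"
  shows "word_mat n M N w = pad_one_mat (n - m) (word_mat m M N w)"
  using assms(1)
proof (induction w)
  case Nil
  show ?case
    using assms(2) by (simp add: word_mat_Nil pad_one_mat_one)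
next
  case (Cons g w)
  have "gen_mat n M N g = pad_one_mat (n - m) (gen_mat m M N g)"
    using Cons.prems assms(2) local_mat_pad[of _ m n] by (cases g) auto
  then show ?case
    using Cons pad_one_mat_mult[OF gen_mat_carrier word_mat_carrier] by (simp add: word_mat_Cons)
qed

lemma word_mat_mult_intertwiner:
  assumes P: "P \<in> carrier_mat (n + 1) (n + 1)"
    and intertwines: "\<forall>g. vt_word n [g] \<longrightarrow> gen_mat n M N g * P = P * gen_mat n M' N' g"
    and w: "vt_word n w"
  shows "word_mat n M N w * P = P * word_mat n M' N' w"
  using w
proof (induction w)
  case Nil
  then show ?case using P by (simp add: word_mat_Nil)
next
  case (Cons g w)
  have g: "vt_word n [g]" and "vt_word n w" using Cons.prems by (auto simp: vt_word_def)
  have G: "gen_mat n M N g \<in> carrier_mat (n + 1) (n + 1)"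
    and G': "gen_mat n M' N' g \<in> carrier_mat (n + 1) (n + 1)"
    and W: "word_mat n M N w \<in> carrier_mat (n + 1) (n + 1)"
    and W': "word_mat n M' N' w \<in> carrier_mat (n + 1) (n + 1)"
    by (rule gen_mat_carrier word_mat_carrier)+
  have "word_mat n M N (g # w) * P = gen_mat n M N g * (word_mat n M N w * P)"
    unfolding word_mat_Cons by (rule assoc_mult_mat[OF G W P])
  also have "\<dots> = (gen_mat n M N g * P) * word_mat n M' N' w"
    using Cons.IH[OF \<open>vt_word n w\<close>] assoc_mult_mat[OF G P W'] by simp
  also have "\<dots> = P * (gen_mat n M' N' g * word_mat n M' N' w)"
    using intertwines g assoc_mult_mat[OF P G' W'] by simp
  finally show ?case
    unfolding word_mat_Cons .
qed

lemma invertible_mat_mult_right_cancel: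
  fixes A B P :: "'a::comm_ring_1 mat"
  assumes "A \<in> carrier_mat r n" "B \<in> carrier_mat r n" "P \<in> carrier_mat n n"
    and "invertible_mat P" and "A * P = B * P"
  shows "A = B"
proof -
  obtain Q where PQ: "P * Q = 1\<^sub>m n" and QP: "Q * P = 1\<^sub>m (dim_row Q)"
    using assms(3,4) unfolding invertible_mat_def inverts_mat_def by auto
  have Q: "Q \<in> carrier_mat n n"
    using PQ QP assms(3) by (metis carrier_matD carrier_matI index_mult_mat(2,3) index_one_mat(2,3))
  have "A = A * P * Q"
    using assms(1,3) Q PQ by (simp add: assoc_mult_mat[of _ r n])
  also have "\<dots> = B"
    using assms(2,3,5) Q PQ by (simp add: assoc_mult_mat[of _ r n])
  finally show ?thesis .
qed

lemma unfaithful_rep_equiv: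
  assumes "rep_equiv n M N M' N'" and "unfaithful n M' N'"
  shows "unfaithful n M N"
proof -
  obtain P where P: "P \<in> carrier_mat (n + 1) (n + 1)" "invertible_mat P"
    and intertwines: "\<forall>g. vt_word n [g] \<longrightarrow> gen_mat n M N g * P = P * gen_mat n M' N' g"
    using assms(1) unfolding rep_equiv_def by blast
  obtain u v where uv: "vt_word n u" "vt_word n v" "\<not> vt_eq n u v"
    and eq: "word_mat n M' N' u = word_mat n M' N' v"
    using assms(2) unfolding unfaithful_def by blast
  have "word_mat n M N u * P = word_mat n M N v * P"
    using word_mat_mult_intertwiner[OF P(1) intertwines] uv eq by simp
  then have "word_mat n M N u = word_mat n M N v"
    using invertible_mat_mult_right_cancel[OF word_mat_carrier word_mat_carrier P] by blast
  then show ?thesis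
    using uv unfolding unfaithful_def by blast
qed

lemma unfaithful_of_word_mat_3_eq:
  assumes "3 \<le> n" and "set u \<union> set v \<subseteq> {S 1, S 2, R 1, R 2}"
    and "\<not> vt_eq n u v" and "word_mat 3 M N u = word_mat 3 M N v"
  shows "unfaithful n M N"
proof -
  have "vt_word n u" "vt_word n v"
    using assms(1,2) by (auto simp: vt_word_def)
  moreover have "word_mat n M N u = word_mat n M N v"
    using word_mat_pad[of u 3 n M N] word_mat_pad[of v 3 n M N] assms by fastforce
  ultimately show ?thesis
    using assms(3) unfolding unfaithful_def by blast
qed

lemma mat_of_rows_list_4_mult:
  "mat_of_rows_list 4 [[a00,a01,a02,a03],[a10,a11,a12,a13],[a20,a21,a22,a23],[a30,a31,a32,a33]]
   * mat_of_rows_list 4 [[b00,b01,b02,b03],[b10,b11,b12,b13],[b20,b21,b22,b23],[b30,b31,b32,b33]]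
   = (mat_of_rows_list 4
      [[a00*b00+a01*b10+a02*b20+a03*b30, a00*b01+a01*b11+a02*b21+a03*b31,
        a00*b02+a01*b12+a02*b22+a03*b32, a00*b03+a01*b13+a02*b23+a03*b33],
       [a10*b00+a11*b10+a12*b20+a13*b30, a10*b01+a11*b11+a12*b21+a13*b31,
        a10*b02+a11*b12+a12*b22+a13*b32, a10*b03+a11*b13+a12*b23+a13*b33],
       [a20*b00+a21*b10+a22*b20+a23*b30, a20*b01+a21*b11+a22*b21+a23*b31,
        a20*b02+a21*b12+a22*b22+a23*b32, a20*b03+a21*b13+a22*b23+a23*b33],
       [a30*b00+a31*b10+a32*b20+a33*b30, a30*b01+a31*b11+a32*b21+a33*b31,
        a30*b02+a31*b12+a32*b22+a33*b32, a30*b03+a31*b13+a32*b23+a33*b33]] :: 'a::semiring_0 mat)"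
  by (rule eq_matI)
    (auto simp: mat_of_rows_list_def scalar_prod_def less_Suc_eq numeral_eq_Suc)

lemma one_mat_4: "1\<^sub>m 4 = mat_of_rows_list 4 [[1,0,0,0],[0,1,0,0],[0,0,1,0],[0,0,0,1]]"
  by (rule eq_matI) (auto simp: mat_of_rows_list_def less_Suc_eq numeral_eq_Suc)

lemma local_mat_3_1_mat3:
  "local_mat 3 (Suc 0) (mat3 [[a,b,c],[d,e,f],[g,h,k]])
   = mat_of_rows_list 4 [[a,b,c,0],[d,e,f,0],[g,h,k,0],[0,0,0,1]]"
  by (rule eq_matI)
    (auto simp: local_mat_def mat3_def mat_of_rows_list_def less_Suc_eq numeral_eq_Suc)

lemma local_mat_3_2_mat3:
  "local_mat 3 2 (mat3 [[a,b,c],[d,e,f],[g,h,k]])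
   = mat_of_rows_list 4 [[1,0,0,0],[0,a,b,c],[0,d,e,f],[0,g,h,k]]"
  by (rule eq_matI)
    (auto simp: local_mat_def mat3_def mat_of_rows_list_def less_Suc_eq numeral_eq_Suc)

lemmas word_mat_3_simps =
  word_mat_def local_mat_3_1_mat3 local_mat_3_2_mat3 one_mat_4 mat_of_rows_list_4_mult

lemma unfaithful_delta1:
  assumes "3 \<le> n" "h \<noteq> 0" "p \<noteq> 0"
  shows "unfaithful n (M1 1 h) (N1 p)"
  by (rule unfaithful_of_word_mat_3_eq[OF assms(1) _ not_vt_eq_S2R1S1R1])
    (use assms(2,3) in \<open>auto simp: word_mat_3_simps M1_def N1_def field_simps\<close>)

lemma unfaithful_delta2:
  assumes "3 \<le> n" "d \<noteq> 0" "k \<noteq> 0"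
  shows "unfaithful n (M2 1 d) (N2 k)"
  by (rule unfaithful_of_word_mat_3_eq[OF assms(1) _ not_vt_eq_S2R1S2R1])
    (use assms(2,3) in \<open>auto simp: word_mat_3_simps M2_def N2_def field_simps\<close>)

lemma unfaithful_delta3:
  assumes "3 \<le> n" "p \<noteq> 0"
  shows "unfaithful n (M3 (1/p) p) (N3 p)"
  by (rule unfaithful_of_word_mat_3_eq[OF assms(1) _ not_vt_eq_S1_R1])
    (use assms(2) in \<open>auto simp: word_mat_3_simps M3_def N3_def field_simps power2_eq_square\<close>)

lemma unfaithful_delta4:
  assumes "3 \<le> n" "k \<noteq> 0"
  shows "unfaithful n (M4 (1/k) k) (N4 k)"
  by (rule unfaithful_of_word_mat_3_eq[OF assms(1) _ not_vt_eq_S1_R1])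
    (use assms(2) in \<open>auto simp: word_mat_3_simps M4_def N4_def field_simps power2_eq_square\<close>)

lemma unfaithful_delta5:
  assumes "3 \<le> n" "k \<noteq> 0"
  shows "unfaithful n (M5 b) (N2 k)"
  by (rule unfaithful_of_word_mat_3_eq[OF assms(1) _ not_vt_eq_S2R1S1R1])
    (use assms(2) in \<open>auto simp: word_mat_3_simps M5_def N2_def field_simps\<close>)

lemma unfaithful_delta6:
  assumes "3 \<le> n" "k \<noteq> 0"
  shows "unfaithful n (M6 b) (N2 k)"
  by (rule unfaithful_of_word_mat_3_eq[OF assms(1) _ not_vt_eq_S2R1S2R1])
    (use assms(2) in \<open>auto simp: word_mat_3_simps M6_def N2_def field_simps\<close>)

lemma unfaithful_diagonal:
  assumes "3 \<le> n"
  shows "unfaithful n (mat3 [[a,0,0],[0,b,0],[0,0,c]]) N"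
  by (rule unfaithful_of_word_mat_3_eq[OF assms(1) _ not_vt_eq_S1S2_S2S1])
    (auto simp: word_mat_3_simps algebra_simps)

lemma unfaithful_delta_5_14:
  assumes "3 \<le> n" and "delta_5_14 n M N"
  shows "unfaithful n M N"
proof -
  have diagonal: "unfaithful n M' N'" if "M' \<in> {I3, M9, M10, M12}" for M' N'
    using that unfaithful_diagonal[OF assms(1)] by (auto simp: I3_def M9_def M10_def M12_def)
  show ?thesis
    using assms(2) unfaithful_delta5[OF assms(1)] unfaithful_delta6[OF assms(1)] diagonal
    unfolding delta_5_14_def by (blast intro: unfaithful_rep_equiv)
qed

theorem theorem4p5:
  fixes n :: nat and M N :: "complex mat"
  assumes "n \<ge> 4"
    and "hom3_rep n M N"
  shows "((\<exists>h p. h \<noteq> 0 \<and> p \<noteq> 0 \<and> rep_equiv n M N (M1 1 h) (N1 p)) \<longrightarrow> unfaithful n M N)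
       \<and> ((\<exists>d k. d \<noteq> 0 \<and> k \<noteq> 0 \<and> rep_equiv n M N (M2 1 d) (N2 k)) \<longrightarrow> unfaithful n M N)
       \<and> ((\<exists>p. p \<noteq> 0 \<and> rep_equiv n M N (M3 (1/p) p) (N3 p)) \<longrightarrow> unfaithful n M N)
       \<and> ((\<exists>k. k \<noteq> 0 \<and> rep_equiv n M N (M4 (1/k) k) (N4 k)) \<longrightarrow> unfaithful n M N)
       \<and> (delta_5_14 n M N \<longrightarrow> unfaithful n M N)"
proof -
  have n: "3 \<le> n"
    using assms(1) by simp
  show ?thesis
    using unfaithful_rep_equiv unfaithful_delta1[OF n] unfaithful_delta2[OF n]
      unfaithful_delta3[OF n] unfaithful_delta4[OF n] unfaithful_delta_5_14[OF n]
    by blast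
qed

end
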